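(* Let $R=k\langle x_1,\dots,x_n\rangle/(S)$ be a quadratic monomial algebra, $S$ a set of monomials $x_ix_j$, and suppose $R$ is initially Koszul with Groebner flag $(x_1,\dots,x_n)$. Let $R^!=k\langle x_1^*,\dots,x_n^*\rangle/(\{x_i^*x_j^* : x_ix_j\notin S\})$ be its quadratic dual algebra. Then $R^!$ is initially Koszul with Groebner flag $(x_n^*,\dots,x_1^* )$.
   Context: For a standard algebra $A$ (graded, $A_0=k$, generated by $A_1$) and a basis $y_1,\dots,y_n$ of $A_1$, let $I_k=y_1A+\dots+y_kA$ ($I_0=0$). $A$ is initially Koszul with Groebner flag $(y_1,\dots,y_n)$ if for each $1\le k\le n$ the right ideal $\{a\in A: y_ka\in I_{k-1}\}$ equals $I_j$ for some $j$ (equivalently $\{I_0,\dots,I_n\}$ is a Koszul filtration). *)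

theory Defs
  imports Main
begin

text \<open>Free associative algebra k<x_1,...,x_n> over a field 'k: elements are finitely
supported coefficient functions on words (lists of variable indices in {1..n}).\<close>

definition free_alg :: "'k::field itself \<Rightarrow> nat \<Rightarrow> (nat list \<Rightarrow> 'k) set" where
  "free_alg K n = {f. finite {w. f w \<noteq> 0} \<and> {w. f w \<noteq> 0} \<subseteq> lists {1..n}}"

definition mono :: "nat list \<Rightarrow> (nat list \<Rightarrow> 'k::field)" where
  "mono u = (\<lambda>w. if w = u then 1 else 0)"

definition var :: "nat \<Rightarrow> (nat list \<Rightarrow> 'k::field)" where
  "var i = mono [i]"

definition fmul :: "(nat list \<Rightarrow> 'k::field) \<Rightarrow> (nat list \<Rightarrow> 'k) \<Rightarrow> (nat list \<Rightarrow> 'k)" where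
  "fmul f g = (\<lambda>w. \<Sum>m\<le>length w. f (take m w) * g (drop m w))"

definition lspan :: "(nat list \<Rightarrow> 'k::field) set \<Rightarrow> (nat list \<Rightarrow> 'k) set" where
  "lspan B = {(\<lambda>w. \<Sum>b\<in>T. c b * b w) | T c. finite T \<and> T \<subseteq> B}"

definition mon_ideal :: "'k::field itself \<Rightarrow> nat \<Rightarrow> (nat \<times> nat) set \<Rightarrow> (nat list \<Rightarrow> 'k) set" where
  "mon_ideal K n S = lspan {fmul (fmul a (fmul (var i) (var j))) b | a b i j.
       a \<in> free_alg K n \<and> b \<in> free_alg K n \<and> (i, j) \<in> S}"

text \<open>Preimage in the free algebra of the right ideal I_m = y_1 R + ... + y_m R of
R = k<x>/(S), for a flag ys of variables (y_l = x_(ys!(l-1))).\<close>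
definition flag_ideal :: "'k::field itself \<Rightarrow> nat \<Rightarrow> (nat \<times> nat) set \<Rightarrow> nat list \<Rightarrow> nat \<Rightarrow> (nat list \<Rightarrow> 'k) set" where
  "flag_ideal K n S ys m = lspan ({fmul (var (ys ! l)) a | l a. l < m \<and> a \<in> free_alg K n}
                                 \<union> mon_ideal K n S)"

text \<open>R = k<x_1..x_n>/(S) is initially Koszul with Groebner flag (x_(ys!0), ..., x_(ys!(n-1))),
where ys is an ordering of the variables (hence a basis of R_1).
The condition {a in R. y_k a in I_(k-1)} = I_j is expressed through preimages in the free
algebra (all sets involved contain (S)).\<close>
definition init_koszul_mon :: "'k::field itself \<Rightarrow> nat \<Rightarrow> (nat \<times> nat) set \<Rightarrow> nat list \<Rightarrow> bool" where
  "init_koszul_mon K n S ys \<longleftrightarrow> distinct ys \<and> set ys = {1..n} \<and>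
     (\<forall>k\<in>{1..length ys}. \<exists>j\<le>length ys.
        {a \<in> free_alg K n. fmul (var (ys ! (k - 1))) a \<in> flag_ideal K n S ys (k - 1)}
          = flag_ideal K n S ys j)"

definition dual_rel :: "nat \<Rightarrow> (nat \<times> nat) set \<Rightarrow> (nat \<times> nat) set" where
  "dual_rel n S = ({1..n} \<times> {1..n}) - S"

end

theory Submission
  imports Defs
begin

text \<open>For a monomial algebra every ideal involved is spanned by the words it contains. The
preimage of I_m is spanned by the words that contain a relation or begin with one of the first m
flag letters, and the colon ideal of I_(k-1) by the k-th flag letter y is spanned by the words u
such that y u contains a relation. Comparing one-letter words shows that R is initially Koszul
with a given flag iff, for every letter y, the letters x with x_y x in S form an initial segment of
the flag. Passing to the dual replaces each such set by its complement, and the complement of an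
initial segment of (x_1, ..., x_n) is an initial segment of the reversed flag.\<close>

definition has_factor :: "(nat \<times> nat) set \<Rightarrow> nat list \<Rightarrow> bool" where
  "has_factor S w \<longleftrightarrow> (\<exists>u i j v. w = u @ [i, j] @ v \<and> (i, j) \<in> S)"

lemma has_factor_Nil [simp]: "\<not> has_factor S []"
  by (simp add: has_factor_def)

lemma has_factor_Cons:
  "has_factor S (y # u) \<longleftrightarrow> has_factor S u \<or> (u \<noteq> [] \<and> (y, hd u) \<in> S)"
proof
  assume "has_factor S (y # u)"
  then obtain p i j v where "y # u = p @ [i, j] @ v" "(i, j) \<in> S"
    unfolding has_factor_def by blast
  then show "has_factor S u \<or> (u \<noteq> [] \<and> (y, hd u) \<in> S)"
    unfolding has_factor_def by (cases p) auto
next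
  assume "has_factor S u \<or> (u \<noteq> [] \<and> (y, hd u) \<in> S)"
  then show "has_factor S (y # u)"
  proof
    assume "has_factor S u"
    then show ?thesis unfolding has_factor_def by (metis append_Cons)
  next
    assume "u \<noteq> [] \<and> (y, hd u) \<in> S"
    then show ?thesis unfolding has_factor_def by (metis append_Cons append_Nil list.collapse)
  qed
qed

definition word_span :: "nat list set \<Rightarrow> (nat list \<Rightarrow> 'k::field) set" where
  "word_span P = {f. finite {w. f w \<noteq> 0} \<and> {w. f w \<noteq> 0} \<subseteq> P}"

lemma free_alg_eq_word_span: "free_alg K n = word_span (lists {1..n})"
  by (simp add: free_alg_def word_span_def)

lemma word_span_mono: "P \<subseteq> Q \<Longrightarrow> word_span P \<subseteq> word_span Q"
  by (auto simp: word_span_def)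

lemma word_span_Int: "word_span P \<inter> word_span Q = word_span (P \<inter> Q)"
  by (auto simp: word_span_def)

lemma support_mono: "{w. (mono u :: nat list \<Rightarrow> 'k::field) w \<noteq> 0} = {u}"
  by (auto simp: mono_def)

lemma mono_in_word_span_iff: "(mono w :: nat list \<Rightarrow> 'k::field) \<in> word_span P \<longleftrightarrow> w \<in> P"
  by (simp add: word_span_def support_mono)

lemma word_span_eq_iff:
  "(word_span P :: (nat list \<Rightarrow> 'k::field) set) = word_span Q \<longleftrightarrow> P = Q"
proof
  assume "(word_span P :: (nat list \<Rightarrow> 'k) set) = word_span Q"
  then have "(mono w :: nat list \<Rightarrow> 'k) \<in> word_span P \<longleftrightarrow> (mono w :: nat list \<Rightarrow> 'k) \<in> word_span Q"
    for w
    by simp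
  then show "P = Q"
    unfolding mono_in_word_span_iff by blast
qed simp

lemma mono_inj: "inj (mono :: nat list \<Rightarrow> nat list \<Rightarrow> 'k::field)"
  by (rule injI) (metis singleton_inject support_mono)

lemma fmul_mono: "fmul (mono u) (mono v) = (mono (u @ v) :: nat list \<Rightarrow> 'k::field)"
proof
  fix w
  have "fmul (mono u) (mono v) w = (\<Sum>m\<le>length w. if m = length u \<and> w = u @ v then (1::'k) else 0)"
    unfolding fmul_def
  proof (rule sum.cong)
    fix m assume "m \<in> {..length w}"
    then have "(take m w = u \<and> drop m w = v) \<longleftrightarrow> (m = length u \<and> w = u @ v)"
      by (metis append_eq_conv_conj atMost_iff length_take min.absorb2)
    then show "mono u (take m w) * mono v (drop m w) = (if m = length u \<and> w = u @ v then (1::'k) else 0)"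
      unfolding mono_def by auto
  qed simp
  also have "\<dots> = mono (u @ v) w"
    unfolding mono_def by auto
  finally show "fmul (mono u) (mono v) w = (mono (u @ v) w :: 'k)" .
qed

lemma fmul_var: "fmul (var y) a = (\<lambda>w. if w \<noteq> [] \<and> hd w = y then a (tl w) else 0)"
proof
  fix w
  show "fmul (var y) a w = (if w \<noteq> [] \<and> hd w = y then a (tl w) else 0)"
  proof (cases w)
    case Nil
    then show ?thesis by (simp add: fmul_def var_def mono_def)
  next
    case (Cons x u)
    have "fmul (var y) a w = (\<Sum>m\<le>Suc (length u). var y (take m (x # u)) * a (drop m (x # u)))"
      unfolding fmul_def Cons by simp
    also have "\<dots> = var y [] * a (x # u) + (\<Sum>m\<le>length u. var y (x # take m u) * a (drop m u))"
      by (subst sum.atMost_Suc_shift) simp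
    also have "\<dots> = (\<Sum>m\<le>length u. var y (x # take m u) * a (drop m u))"
      by (simp add: var_def mono_def)
    also have "\<dots> = (\<Sum>m\<le>length u. if m = 0 \<and> x = y then a u else 0)"
      by (rule sum.cong) (auto simp: var_def mono_def)
    also have "\<dots> = (if x = y then a u else 0)"
      by simp
    finally show ?thesis using Cons by simp
  qed
qed

lemma fmul_var_in_word_span_iff:
  "fmul (var y) a \<in> word_span P \<longleftrightarrow> a \<in> word_span {u. y # u \<in> P}"
proof -
  have "{w. fmul (var y) a w \<noteq> 0} = Cons y ` {u. a u \<noteq> 0}"
    unfolding fmul_var by (auto simp: image_iff) (metis list.collapse)
  then show ?thesis
    unfolding word_span_def by (auto simp: finite_image_iff)
qed

lemma support_fmul_subset:
  "{w. fmul f g w \<noteq> 0} \<subseteq> (\<lambda>(u, v). u @ v) ` ({u. f u \<noteq> 0} \<times> {v. g v \<noteq> 0})"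
proof
  fix w assume "w \<in> {w. fmul f g w \<noteq> 0}"
  then obtain m where "f (take m w) * g (drop m w) \<noteq> 0"
    unfolding fmul_def by (auto intro: sum.not_neutral_contains_not_neutral)
  then show "w \<in> (\<lambda>(u, v). u @ v) ` ({u. f u \<noteq> 0} \<times> {v. g v \<noteq> 0})"
    by (intro image_eqI[where x = "(take m w, drop m w)"]) auto
qed

lemma fmul_in_word_span:
  assumes "f \<in> word_span P" and "g \<in> word_span Q"
  shows "fmul f g \<in> word_span {u @ v | u v. u \<in> P \<and> v \<in> Q}"
proof -
  let ?W = "(\<lambda>(u, v). u @ v) ` ({u. f u \<noteq> 0} \<times> {v. g v \<noteq> 0})"
  have "finite ?W" and "?W \<subseteq> {u @ v | u v. u \<in> P \<and> v \<in> Q}"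
    using assms unfolding word_span_def by auto
  with support_fmul_subset[of f g] show ?thesis
    unfolding word_span_def mem_Collect_eq by (meson finite_subset order_trans)
qed

lemma lspan_superset: "B \<subseteq> lspan B"
proof
  fix b assume "b \<in> B"
  then show "b \<in> lspan B"
    unfolding lspan_def by (intro CollectI exI[of _ "{b}"] exI[of _ "\<lambda>_. 1"]) auto
qed

lemma lspan_subset_word_span:
  assumes "B \<subseteq> word_span P"
  shows "lspan B \<subseteq> word_span P"
proof
  fix f assume "f \<in> lspan B"
  then obtain T c where f: "f = (\<lambda>w. \<Sum>b\<in>T. c b * b w)" and T: "finite T" "T \<subseteq> B"
    unfolding lspan_def by blast
  have "{w. f w \<noteq> 0} \<subseteq> (\<Union>b\<in>T. {w. b w \<noteq> 0})"
  proof
    fix w assume "w \<in> {w. f w \<noteq> 0}"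
    then obtain b where "b \<in> T" "c b * b w \<noteq> 0"
      unfolding f by (auto intro: sum.not_neutral_contains_not_neutral)
    then show "w \<in> (\<Union>b\<in>T. {w. b w \<noteq> 0})" by auto
  qed
  moreover have "finite (\<Union>b\<in>T. {w. b w \<noteq> 0})" and "(\<Union>b\<in>T. {w. b w \<noteq> 0}) \<subseteq> P"
    using T assms unfolding word_span_def by auto
  ultimately show "f \<in> word_span P"
    unfolding word_span_def by (auto intro: finite_subset)
qed

lemma word_span_subset_lspan:
  assumes "\<And>w. w \<in> P \<Longrightarrow> (mono w :: nat list \<Rightarrow> 'k::field) \<in> B"
  shows "(word_span P :: (nat list \<Rightarrow> 'k::field) set) \<subseteq> lspan B"
proof
  fix f :: "nat list \<Rightarrow> 'k" assume "f \<in> word_span P"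
  define A where "A = {w. f w \<noteq> 0}"
  have "finite A" and "A \<subseteq> P"
    using \<open>f \<in> word_span P\<close> unfolding word_span_def A_def by auto
  define c where "c = (\<lambda>b. f (inv (mono :: nat list \<Rightarrow> nat list \<Rightarrow> 'k) b))"
  have "f = (\<lambda>w. \<Sum>b\<in>mono ` A. c b * b w)"
  proof
    fix w
    have "(\<Sum>b\<in>mono ` A. c b * b w) = (\<Sum>u\<in>A. f u * mono u w)"
      by (simp add: sum.reindex inj_on_subset[OF mono_inj] c_def inv_f_f[OF mono_inj])
    also have "\<dots> = f w"
      using \<open>finite A\<close> by (simp add: A_def mono_def if_distrib cong: if_cong)
    finally show "f w = (\<Sum>b\<in>mono ` A. c b * b w)" by simp
  qed
  moreover have "mono ` A \<subseteq> B" and "finite (mono ` A)"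
    using \<open>finite A\<close> \<open>A \<subseteq> P\<close> assms by auto
  ultimately show "f \<in> lspan B"
    unfolding lspan_def by blast
qed

definition flag_words :: "(nat \<times> nat) set \<Rightarrow> nat list \<Rightarrow> nat \<Rightarrow> nat \<Rightarrow> nat list set" where
  "flag_words S ys m n =
     {w \<in> lists {1..n}. has_factor S w \<or> (w \<noteq> [] \<and> hd w \<in> set (take m ys))}"

lemma relation_generator_in_word_span:
  fixes K :: "'k::field itself"
  assumes "S \<subseteq> {1..n} \<times> {1..n}" and "(i, j) \<in> S"
    and "a \<in> free_alg K n" and "b \<in> free_alg K n"
  shows "fmul (fmul a (fmul (var i) (var j))) b \<in> word_span (flag_words S ys m n)"
proof -
  have "fmul (var i) (var j) = (mono [i, j] :: nat list \<Rightarrow> 'k)"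
    by (simp add: var_def fmul_mono)
  then have "fmul (var i) (var j) \<in> (word_span {[i, j]} :: (nat list \<Rightarrow> 'k) set)"
    by (simp add: mono_in_word_span_iff)
  with assms(3,4) have "fmul (fmul a (fmul (var i) (var j))) b \<in> word_span
      {p @ v | p v. p \<in> {u @ q | u q. u \<in> lists {1..n} \<and> q \<in> {[i, j]}} \<and> v \<in> lists {1..n}}"
    unfolding free_alg_eq_word_span by (intro fmul_in_word_span)
  moreover have "{p @ v | p v. p \<in> {u @ q | u q. u \<in> lists {1..n} \<and> q \<in> {[i, j]}} \<and> v \<in> lists {1..n}}
      \<subseteq> flag_words S ys m n"
    using assms(1,2) unfolding flag_words_def has_factor_def by fastforce
  ultimately show ?thesis
    using word_span_mono by blast
qed

lemma mono_in_mon_ideal: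
  assumes "(i, j) \<in> S" and "u \<in> lists {1..n}" and "v \<in> lists {1..n}"
  shows "mono (u @ [i, j] @ v) \<in> mon_ideal K n S"
proof -
  have "mono (u @ [i, j] @ v) = fmul (fmul (mono u) (fmul (var i) (var j))) (mono v)"
    by (simp add: var_def fmul_mono)
  moreover have "mono u \<in> free_alg K n" and "mono v \<in> free_alg K n"
    using assms(2,3) by (simp_all only: free_alg_eq_word_span mono_in_word_span_iff)
  ultimately have "mono (u @ [i, j] @ v) \<in> {fmul (fmul a (fmul (var i) (var j))) b | a b i j.
      a \<in> free_alg K n \<and> b \<in> free_alg K n \<and> (i, j) \<in> S}"
    using assms(1) unfolding mem_Collect_eq
    by (intro exI[of _ "mono u"] exI[of _ "mono v"] exI[of _ i] exI[of _ j] conjI)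
  then show ?thesis
    unfolding mon_ideal_def by (rule subsetD[OF lspan_superset])
qed

lemma flag_ideal_eq_word_span:
  assumes "S \<subseteq> {1..n} \<times> {1..n}" and "set ys \<subseteq> {1..n}" and "m \<le> length ys"
  shows "flag_ideal K n S ys m = word_span (flag_words S ys m n)"
proof
  let ?B = "{fmul (var (ys ! l)) a | l a. l < m \<and> a \<in> free_alg K n}"
  have "?B \<subseteq> word_span (flag_words S ys m n)"
  proof
    fix g assume "g \<in> ?B"
    then obtain l a where g: "g = fmul (var (ys ! l)) a" and l: "l < m" and a: "a \<in> free_alg K n"
      by blast
    have "ys ! l \<in> set (take m ys)"
      using assms(3) l by (auto simp: in_set_conv_nth)
    moreover have "ys ! l \<in> {1..n}"
      using assms(2,3) l by (meson nth_mem less_le_trans subsetD)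
    ultimately have "lists {1..n} \<subseteq> {u. ys ! l # u \<in> flag_words S ys m n}"
      by (auto simp: flag_words_def)
    with a show "g \<in> word_span (flag_words S ys m n)"
      unfolding g fmul_var_in_word_span_iff free_alg_eq_word_span using word_span_mono by blast
  qed
  moreover have "mon_ideal K n S \<subseteq> word_span (flag_words S ys m n)"
    unfolding mon_ideal_def
    by (rule lspan_subset_word_span) (auto intro: relation_generator_in_word_span[OF assms(1)])
  ultimately show "flag_ideal K n S ys m \<subseteq> word_span (flag_words S ys m n)"
    unfolding flag_ideal_def by (intro lspan_subset_word_span) blast
  show "word_span (flag_words S ys m n) \<subseteq> flag_ideal K n S ys m"
    unfolding flag_ideal_def
  proof (rule word_span_subset_lspan)
    fix w assume w: "w \<in> flag_words S ys m n"
    show "mono w \<in> ?B \<union> mon_ideal K n S"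
    proof (cases "has_factor S w")
      case True
      then obtain u i j v where uv: "w = u @ [i, j] @ v" and ij: "(i, j) \<in> S"
        unfolding has_factor_def by blast
      with w have "u \<in> lists {1..n}" and "v \<in> lists {1..n}"
        by (auto simp: flag_words_def)
      with ij show ?thesis
        unfolding uv by (blast intro: mono_in_mon_ideal)
    next
      case False
      with w obtain l u where w_eq: "w = ys ! l # u" and "l < m" and "u \<in> lists {1..n}"
        by (cases w) (auto simp: flag_words_def in_set_conv_nth)
      then have "mono u \<in> free_alg K n"
        by (simp only: free_alg_eq_word_span mono_in_word_span_iff)
      moreover have "mono w = fmul (var (ys ! l)) (mono u)"
        unfolding w_eq by (simp add: var_def fmul_mono)
      ultimately have "mono w \<in> ?B"
        using \<open>l < m\<close> unfolding mem_Collect_eq by (intro exI conjI)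
      then show ?thesis ..
    qed
  qed
qed

lemma colon_flag_ideal_eq:
  assumes "S \<subseteq> {1..n} \<times> {1..n}" and "set ys \<subseteq> {1..n}" and "m \<le> length ys"
    and "y \<in> {1..n}" and "y \<notin> set (take m ys)"
  shows "{a \<in> free_alg K n. fmul (var y) a \<in> flag_ideal K n S ys m}
    = word_span {u \<in> lists {1..n}. has_factor S (y # u)}"
proof -
  have "{a \<in> free_alg K n. fmul (var y) a \<in> flag_ideal K n S ys m}
      = word_span (lists {1..n}) \<inter> word_span {u. y # u \<in> flag_words S ys m n}"
    by (auto simp: flag_ideal_eq_word_span[OF assms(1-3)] free_alg_eq_word_span
        fmul_var_in_word_span_iff)
  moreover have "lists {1..n} \<inter> {u. y # u \<in> flag_words S ys m n}
      = {u \<in> lists {1..n}. has_factor S (y # u)}"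
    using assms(4,5) by (auto simp: flag_words_def)
  ultimately show ?thesis
    by (simp add: word_span_Int)
qed

lemma colon_words_eq_flag_words_iff:
  assumes "S \<subseteq> {1..n} \<times> {1..n}" and "set ys \<subseteq> {1..n}"
  shows "{u \<in> lists {1..n}. has_factor S (y # u)} = flag_words S ys j n
    \<longleftrightarrow> S `` {y} = set (take j ys)"
proof
  assume words: "{u \<in> lists {1..n}. has_factor S (y # u)} = flag_words S ys j n"
  have "(y, i) \<in> S \<longleftrightarrow> i \<in> set (take j ys)" if "i \<in> {1..n}" for i
    using that words[THEN eqset_imp_iff, of "[i]"] by (simp add: flag_words_def has_factor_Cons)
  moreover have "S `` {y} \<subseteq> {1..n}" and "set (take j ys) \<subseteq> {1..n}"
    using assms set_take_subset[of j ys] by blast+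
  ultimately show "S `` {y} = set (take j ys)"
    by auto
next
  assume "S `` {y} = set (take j ys)"
  then have "has_factor S (y # u) \<longleftrightarrow> has_factor S u \<or> (u \<noteq> [] \<and> hd u \<in> set (take j ys))"
    for u
    unfolding has_factor_Cons by blast
  then show "{u \<in> lists {1..n}. has_factor S (y # u)} = flag_words S ys j n"
    unfolding flag_words_def by simp
qed

lemma nth_notin_set_take:
  assumes "distinct ys" and "k < length ys"
  shows "ys ! k \<notin> set (take k ys)"
  using assms by (auto simp: in_set_conv_nth nth_eq_iff_index_eq)

lemma colon_eq_flag_ideal_iff:
  assumes S: "S \<subseteq> {1..n} \<times> {1..n}" and ys: "distinct ys" "set ys = {1..n}"
    and "k < length ys" and "j \<le> length ys"
  shows "{a \<in> free_alg K n. fmul (var (ys ! k)) a \<in> flag_ideal K n S ys k} = flag_ideal K n S ys j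
    \<longleftrightarrow> S `` {ys ! k} = set (take j ys)"
proof -
  have "ys ! k \<in> {1..n}"
    using ys(2) nth_mem[OF \<open>k < length ys\<close>] by blast
  with assms have "{a \<in> free_alg K n. fmul (var (ys ! k)) a \<in> flag_ideal K n S ys k}
      = word_span {u \<in> lists {1..n}. has_factor S (ys ! k # u)}"
    by (intro colon_flag_ideal_eq nth_notin_set_take) auto
  moreover have "flag_ideal K n S ys j = word_span (flag_words S ys j n)"
    using assms by (intro flag_ideal_eq_word_span) auto
  moreover have "set ys \<subseteq> {1..n}"
    using ys(2) by simp
  ultimately show ?thesis
    by (simp only: word_span_eq_iff colon_words_eq_flag_words_iff[OF S])
qed

theorem init_koszul_mon_iff:
  assumes "S \<subseteq> {1..n} \<times> {1..n}"
  shows "init_koszul_mon K n S ys \<longleftrightarrow>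
    distinct ys \<and> set ys = {1..n} \<and> (\<forall>y \<in> {1..n}. \<exists>j \<le> n. S `` {y} = set (take j ys))"
proof (cases "distinct ys \<and> set ys = {1..n}")
  case True
  then have len: "length ys = n"
    using distinct_card by fastforce
  have "{a \<in> free_alg K n. fmul (var (ys ! (k - 1))) a \<in> flag_ideal K n S ys (k - 1)}
      = flag_ideal K n S ys j \<longleftrightarrow> S `` {ys ! (k - 1)} = set (take j ys)"
    if "k \<in> {1..n}" and "j \<le> n" for k j
    using that True len by (intro colon_eq_flag_ideal_iff[OF assms]) auto
  then have "init_koszul_mon K n S ys \<longleftrightarrow>
      (\<forall>k \<in> {1..n}. \<exists>j \<le> n. S `` {ys ! (k - 1)} = set (take j ys))"
    unfolding init_koszul_mon_def len using True by blast
  also have "\<dots> \<longleftrightarrow> (\<forall>k < n. \<exists>j \<le> n. S `` {ys ! k} = set (take j ys))"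
    unfolding image_Suc_lessThan[symmetric] by auto
  also have "\<dots> \<longleftrightarrow> (\<forall>y \<in> set ys. \<exists>j \<le> n. S `` {y} = set (take j ys))"
    unfolding all_set_conv_all_nth len ..
  finally show ?thesis
    using True by simp
next
  case False
  then show ?thesis
    by (auto simp: init_koszul_mon_def)
qed

theorem mainTheorem9:
  fixes n :: nat and S :: "(nat \<times> nat) set"
  assumes "S \<subseteq> {1..n} \<times> {1..n}"
    and "init_koszul_mon TYPE('k::field) n S [1..<n+1]"
  shows "init_koszul_mon TYPE('k) n (dual_rel n S) (rev [1..<n+1])"
proof -
  have dual: "dual_rel n S \<subseteq> {1..n} \<times> {1..n}"
    by (auto simp: dual_rel_def)
  have segments: "\<forall>y \<in> {1..n}. \<exists>j \<le> n. S `` {y} = set (take j [1..<n+1])"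
    using assms(2) unfolding init_koszul_mon_iff[OF assms(1)] by blast
  have "\<exists>j \<le> n. dual_rel n S `` {y} = set (take j (rev [1..<n+1]))" if y: "y \<in> {1..n}" for y
  proof -
    obtain j where "j \<le> n" and "S `` {y} = set (take j [1..<n+1])"
      using segments y by blast
    then have "S `` {y} = {1..j}"
      by (auto simp del: upt_Suc)
    have "dual_rel n S `` {y} = {1..n} - S `` {y}"
      using y by (auto simp: dual_rel_def)
    also have "\<dots> = {j<..n}"
      using \<open>S `` {y} = {1..j}\<close> by auto
    also have "\<dots> = set (take (n - j) (rev [1..<n+1]))"
      using \<open>j \<le> n\<close> by (auto simp: take_rev simp del: upt_Suc)
    finally show ?thesis
      by (intro exI[of _ "n - j"]) simp
  qed
  then show ?thesis
    using dual by (simp add: init_koszul_mon_iff atLeastLessThanSuc_atLeastAtMost del: upt_Suc)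
qed

end
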